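(* Let $\rho>0$ and assume $\Gamma(0)<\Gamma(1)$ and $1+\rho\ln\mu(0)>0$. Then for every $\rho$-admissible scaling $n\mapsto L_n$, \[ \lim_{n\to\infty}\mathbb{E}[I_n(L_n)]=\begin{cases}\infty&\text{if } 1+\rho\ln\Gamma(0)<0,\\ 0&\text{if } 1+\rho\ln\Gamma(0)>0.\end{cases} \]
   Context: Homogeneous binary MAG model. Fix $\mu(0),\mu(1)\in(0,1)$ with $\mu(0)+\mu(1)=1$, and a symmetric $2\times2$ matrix $(q(a,b))$ with $q(0,1)=q(1,0)$ and $0<q(a,b)<1$. On a probability space, $\{A,A_\ell(u):\ell,u\ge1\}$ are i.i.d. $\{0,1\}$-valued with $\mathbb{P}[A=1]=\mu(1)$, independent of i.i.d. uniform$(0,1)$ variables $\{U(u,v):1\le u<v\}$, $U(v,u)=U(u,v)$. With $\mathbf A_L(u)=(A_1(u),\dots,A_L(u))$ and $Q_L(\mathbf a,\mathbf b)=\prod_{\ell=1}^Lq(a_\ell,b_\ell)$, the graph $\mathbb{M}(n;L)$ on $\{1,\dots,n\}$ has an edge between distinct $u,v$ iff $U(u,v)\le Q_L(\mathbf A_L(u),\mathbf A_L(v))$. $I_n(L)$ denotes the number of isolated nodes (nodes with no neighbor) in $\mathbb{M}(n;L)$. $\Gamma(a)=\mathbb{E}[q(a,A)]$. A scaling $n\mapsto L_n$ of positive integers is $\rho$-admissible if $L_n\sim\rho\ln n$. *)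

theory Defs
  imports "HOL-Probability.Probability" "HOL-Library.Landau_Symbols"
begin

definition attr_pmf :: "real \<Rightarrow> nat pmf" where
  "attr_pmf mu1 = map_pmf (\<lambda>b. if b then 1 else 0) (bernoulli_pmf mu1)"

definition QL :: "(nat \<Rightarrow> nat \<Rightarrow> real) \<Rightarrow> nat \<Rightarrow> (nat \<Rightarrow> nat) \<Rightarrow> (nat \<Rightarrow> nat) \<Rightarrow> real" where
  "QL q L a b = (\<Prod>l\<in>{1..L}. q (a l) (b l))"

definition Gamma_MAG :: "real \<Rightarrow> real \<Rightarrow> (nat \<Rightarrow> nat \<Rightarrow> real) \<Rightarrow> nat \<Rightarrow> real" where
  "Gamma_MAG mu0 mu1 q a = mu0 * q a 0 + mu1 * q a 1"

text \<open>Probability space for M(n;L): attributes A_l(u) (u in 1..n, l in 1..L), i.i.d.,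
  independent of i.i.d. uniform(0,1) variables U(u,v), 1 <= u < v <= n.\<close>
definition MAG_space :: "real \<Rightarrow> nat \<Rightarrow> nat \<Rightarrow> ((nat \<times> nat \<Rightarrow> nat) \<times> (nat \<times> nat \<Rightarrow> real)) measure" where
  "MAG_space mu1 n L =
     pair_measure
       (PiM ({1..n} \<times> {1..L}) (\<lambda>_. measure_pmf (attr_pmf mu1)))
       (PiM {(u, v). 1 \<le> u \<and> u < v \<and> v \<le> n} (\<lambda>_. uniform_measure lborel {0<..<1}))"

definition MAG_adj :: "(nat \<Rightarrow> nat \<Rightarrow> real) \<Rightarrow> nat \<Rightarrow> (nat \<times> nat \<Rightarrow> nat) \<times> (nat \<times> nat \<Rightarrow> real) \<Rightarrow> nat \<Rightarrow> nat \<Rightarrow> bool" where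
  "MAG_adj q L \<omega> u v =
     (u \<noteq> v \<and> snd \<omega> (min u v, max u v) \<le> QL q L (\<lambda>l. fst \<omega> (u, l)) (\<lambda>l. fst \<omega> (v, l)))"

definition isolated_count :: "(nat \<Rightarrow> nat \<Rightarrow> real) \<Rightarrow> nat \<Rightarrow> nat \<Rightarrow> (nat \<times> nat \<Rightarrow> nat) \<times> (nat \<times> nat \<Rightarrow> real) \<Rightarrow> nat" where
  "isolated_count q n L \<omega> = card {u \<in> {1..n}. \<forall>v \<in> {1..n}. \<not> MAG_adj q L \<omega> u v}"

definition expected_isolated :: "real \<Rightarrow> (nat \<Rightarrow> nat \<Rightarrow> real) \<Rightarrow> nat \<Rightarrow> nat \<Rightarrow> real" where
  "expected_isolated mu1 q n L =
     integral\<^sup>L (MAG_space mu1 n L) (\<lambda>\<omega>. real (isolated_count q n L \<omega>))"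

definition admissible :: "real \<Rightarrow> (nat \<Rightarrow> nat) \<Rightarrow> bool" where
  "admissible \<rho> L \<longleftrightarrow> (\<forall>n. L n \<ge> 1) \<and> (\<lambda>n. real (L n)) \<sim>[at_top] (\<lambda>n. \<rho> * ln (real n))"

end

theory Submission
  imports Defs "HOL-Real_Asymp.Real_Asymp"
begin

(* Node u is isolated iff U(u,v) > Q_L(A_L(u), A_L(v)) for every v \<noteq> u. Integrating out the
   independent uniforms, and then, given A_L(u) = x, the independent attribute vectors of the
   other nodes, gives
     P[u isolated] = E[(1 - \<Prod>_l \<Gamma>(A_l(u)))^(n-1)].
   As \<Gamma>(0) \<le> \<Gamma>(a) \<le> 1, this lies between \<mu>(0)^L (1 - \<Gamma>(0)^L)^(n-1) (the event A_L(u) = 0)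
   and (1 - \<Gamma>(0)^L)^(n-1). For L = L_n ~ \<rho> ln n we have n x^L = n^(1 + \<rho> ln x + o(1)).
   If 1 + \<rho> ln \<Gamma>(0) > 0, then n (1 - \<Gamma>(0)^L)^(n-1) \<le> n exp(-(n-1) \<Gamma>(0)^L) \<rightarrow> 0; if it is
   negative, then (n-1) \<Gamma>(0)^L \<rightarrow> 0, so (1 - \<Gamma>(0)^L)^(n-1) \<ge> 1/2 eventually by Bernoulli's
   inequality, while n \<mu>(0)^L \<rightarrow> \<infinity> because 1 + \<rho> ln \<mu>(0) > 0. *)

section \<open>Finite products of probability spaces\<close>

lemma prod_of_bool:
  "finite S \<Longrightarrow> (\<Prod>v\<in>S. of_bool (P v) :: 'a::comm_semiring_1) = of_bool (\<forall>v\<in>S. P v)"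
  by (induct S rule: finite_induct) auto

lemma sum_PiE_of_bool_eq:
  fixes h :: "('i \<Rightarrow> 'b) \<Rightarrow> 'a::semiring_1"
  assumes "finite S" "finite B" "\<And>l. l \<in> S \<Longrightarrow> y l \<in> B"
  shows "(\<Sum>x\<in>PiE S (\<lambda>_. B). of_bool (\<forall>l\<in>S. y l = x l) * h x) = h (restrict y S)"
proof -
  have "(\<forall>l\<in>S. y l = x l) \<longleftrightarrow> restrict y S = x" if "x \<in> PiE S (\<lambda>_. B)" for x
    using that by (auto simp: PiE_def extensional_def fun_eq_iff)
  then have "(\<Sum>x\<in>PiE S (\<lambda>_. B). of_bool (\<forall>l\<in>S. y l = x l) * h x)
      = (\<Sum>x\<in>PiE S (\<lambda>_. B). if restrict y S = x then h x else 0)"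
    by (intro sum.cong) auto
  also have "\<dots> = h (restrict y S)"
    using assms by (simp add: finite_PiE)
  finally show ?thesis .
qed

lemma integral_PiM_prod_components:
  fixes g :: "'v \<Rightarrow> 'a \<Rightarrow> real"
  assumes M: "\<And>i. prob_space (M i)" and I: "finite I"
    and p: "inj_on p S" "p ` S \<subseteq> I"
    and g: "\<And>v. v \<in> S \<Longrightarrow> integrable (M (p v)) (g v)"
  shows "(\<integral>x. (\<Prod>v\<in>S. g v (x (p v))) \<partial>PiM I M) = (\<Prod>v\<in>S. \<integral>y. g v y \<partial>M (p v))"
proof -
  interpret product_sigma_finite M
    by (simp add: product_sigma_finite_def M prob_space_imp_sigma_finite)
  define f where "f i = (if i \<in> p ` S then g (the_inv_into S p i) else (\<lambda>_. 1))" for i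
  have f_p: "f (p v) = g v" if "v \<in> S" for v
    using that by (simp add: f_def the_inv_into_f_f[OF p(1)])
  have prod_eq: "(\<Prod>v\<in>S. g v (x (p v))) = (\<Prod>i\<in>I. f i (x i))" for x
  proof -
    have "(\<Prod>v\<in>S. g v (x (p v))) = (\<Prod>i\<in>p ` S. f i (x i))"
      by (simp add: prod.reindex[OF p(1)] f_p)
    also have "\<dots> = (\<Prod>i\<in>I. f i (x i))"
      by (rule prod.mono_neutral_left) (use I p in \<open>auto simp: f_def\<close>)
    finally show ?thesis .
  qed
  have intf: "integrable (M i) (f i)" for i
  proof -
    interpret prob_space "M i" by (rule M)
    show ?thesis using g by (auto simp: f_def the_inv_into_f_f[OF p(1)])
  qed
  have one: "integral\<^sup>L (M i) (f i) = 1" if "i \<notin> p ` S" for i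
  proof -
    interpret prob_space "M i" by (rule M)
    show ?thesis using that by (simp add: f_def prob_space)
  qed
  have "(\<integral>x. (\<Prod>v\<in>S. g v (x (p v))) \<partial>PiM I M) = (\<integral>x. (\<Prod>i\<in>I. f i (x i)) \<partial>PiM I M)"
    by (simp add: prod_eq)
  also have "\<dots> = (\<Prod>i\<in>I. integral\<^sup>L (M i) (f i))"
    by (rule product_integral_prod[OF I], rule intf)
  also have "\<dots> = (\<Prod>i\<in>p ` S. integral\<^sup>L (M i) (f i))"
    by (rule prod.mono_neutral_right[OF I p(2)]) (use one in auto)
  also have "\<dots> = (\<Prod>v\<in>S. \<integral>y. g v y \<partial>M (p v))"
    by (simp add: prod.reindex[OF p(1)] f_p)
  finally show ?thesis .
qed

lemma indep_vars_PiM_components: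
  assumes M: "\<And>i. prob_space (M i)" and I: "finite I"
  shows "prob_space.indep_vars (PiM I M) M (\<lambda>i x. x i) I"
proof -
  interpret PS: prob_space "PiM I M" by (rule prob_space_PiM) (use M in auto)
  show ?thesis
  proof (cases "I = {}")
    case True
    then show ?thesis unfolding PS.indep_vars_def PS.indep_sets_def by auto
  next
    case False
    show ?thesis
    proof (subst PS.indep_vars_iff_distr_eq_PiM'[OF False])
      show "(\<lambda>x. x i) \<in> measurable (PiM I M) (M i)" if "i \<in> I" for i
        using that by (rule measurable_component_singleton)
      have "distr (PiM I M) (PiM I M) (\<lambda>x. restrict x I) = distr (PiM I M) (PiM I M) (\<lambda>x. x)"
        by (rule distr_cong) (auto simp: space_PiM)
      also have "\<dots> = PiM I (\<lambda>i. distr (PiM I M) (M i) (\<lambda>x. x i))"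
        by (simp, rule PiM_cong) (auto simp: distr_PiM_component M)
      finally show "distr (PiM I M) (PiM I M) (\<lambda>x. \<lambda>i\<in>I. x i) =
          PiM I (\<lambda>i. distr (PiM I M) (M i) (\<lambda>x. x i))" .
    qed
  qed
qed

lemma integral_PiM_prod_blocks:
  fixes g :: "'j \<Rightarrow> ('i \<Rightarrow> 'a) \<Rightarrow> real"
  assumes M: "\<And>i. prob_space (M i)" and I: "finite I" and S: "finite S"
    and K: "\<And>j. j \<in> S \<Longrightarrow> K j \<subseteq> I" and disj: "disjoint_family_on K S"
    and meas: "\<And>j. j \<in> S \<Longrightarrow> g j \<in> borel_measurable (PiM (K j) M)"
    and bnd: "\<And>j y. j \<in> S \<Longrightarrow> \<bar>g j y\<bar> \<le> B"
  shows "(\<integral>x. (\<Prod>j\<in>S. g j (restrict x (K j))) \<partial>PiM I M) =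
    (\<Prod>j\<in>S. \<integral>x. g j (restrict x (K j)) \<partial>PiM I M)"
proof -
  interpret PS: prob_space "PiM I M" by (rule prob_space_PiM) (use M in auto)
  have "PS.indep_vars (\<lambda>j. PiM (K j) M) (\<lambda>j x. restrict (\<lambda>i. x i) (K j)) S"
    by (rule PS.indep_vars_restrict[OF indep_vars_PiM_components[OF M I] K disj])
  then have "PS.indep_vars (\<lambda>_. borel) (\<lambda>j x. g j (restrict x (K j))) S"
    using PS.indep_vars_compose2[where Y=g and N="\<lambda>_. borel"] meas by auto
  moreover have "integrable (PiM I M) (\<lambda>x. g j (restrict x (K j)))" if "j \<in> S" for j
    using measurable_compose[OF measurable_restrict_subset[OF K[OF that]] meas[OF that]] bnd that
    by (intro PS.integrable_const_bound[where B=B]) auto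
  ultimately show ?thesis
    by (rule PS.indep_vars_lebesgue_integral[OF S])
qed

section \<open>The probability space of the MAG model\<close>

abbreviation attr_measure :: "real \<Rightarrow> nat measure" where
  "attr_measure mu1 \<equiv> measure_pmf (attr_pmf mu1)"

abbreviation attr_space :: "real \<Rightarrow> nat \<Rightarrow> nat \<Rightarrow> (nat \<times> nat \<Rightarrow> nat) measure" where
  "attr_space mu1 n L \<equiv> PiM ({1..n} \<times> {1..L}) (\<lambda>_. attr_measure mu1)"

abbreviation unif01 :: "real measure" where
  "unif01 \<equiv> uniform_measure lborel {0<..<1}"

abbreviation node_pairs :: "nat \<Rightarrow> (nat \<times> nat) set" where
  "node_pairs n \<equiv> {(u, v). 1 \<le> u \<and> u < v \<and> v \<le> n}"

lemma prob_space_unif01: "prob_space unif01"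
  by (rule prob_space_uniform_measure) auto

lemma prob_space_attr_PiM: "prob_space (PiM I (\<lambda>_. attr_measure mu1))"
  by (intro prob_space_PiM measure_pmf.prob_space_axioms)

lemma prob_space_MAG_space: "prob_space (MAG_space mu1 n L)"
  unfolding MAG_space_def
  by (intro prob_space_pair prob_space_PiM measure_pmf.prob_space_axioms prob_space_unif01)

lemma integral_attr_measure:
  assumes "0 \<le> mu1" "mu1 \<le> 1"
  shows "(\<integral>y. f y \<partial>attr_measure mu1) = (1 - mu1) * f 0 + mu1 * (f 1 :: real)"
  using assms unfolding attr_pmf_def by (simp add: algebra_simps)

lemma integrable_attr_measure: "integrable (attr_measure mu1) (f :: nat \<Rightarrow> real)"
  by (rule integrable_measure_pmf_finite) (simp add: attr_pmf_def)

lemma AE_attr_space_binary: "AE a in attr_space mu1 n L. \<forall>i\<in>{1..n} \<times> {1..L}. a i \<in> {0, 1}"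
proof (rule AE_finite_allI)
  show "AE a in attr_space mu1 n L. a i \<in> {0, 1}" if "i \<in> {1..n} \<times> {1..L}" for i
    using that
    by (intro AE_PiM_component[where P="\<lambda>y. y \<in> {0, 1}"] AE_pmfI measure_pmf.prob_space_axioms)
       (auto simp: attr_pmf_def)
qed simp

lemma borel_measurable_attr_component:
  assumes "i \<in> K"
  shows "(\<lambda>y. h (y i) :: real) \<in> borel_measurable (PiM K (\<lambda>_. attr_measure mu1))"
  using measurable_component_singleton[OF assms] by (rule measurable_compose) simp

lemma borel_measurable_attr_component2:
  assumes "i \<in> K" "j \<in> K"
  shows "(\<lambda>y. h (y i) (y j) :: real) \<in> borel_measurable (PiM K (\<lambda>_. attr_measure mu1))"
proof (rule measurable_compose_countable'[where f="\<lambda>z y. h z (y j)" and g="\<lambda>y. y i" and I=UNIV])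
  show "(\<lambda>y. y i) \<in> PiM K (\<lambda>_. attr_measure mu1) \<rightarrow>\<^sub>M count_space UNIV"
    using measurable_component_singleton[OF assms(1), of "\<lambda>_. attr_measure mu1"] by simp
qed (use borel_measurable_attr_component[OF assms(2)] in auto)

lemma borel_measurable_attr_vector_eq:
  fixes L :: nat
  assumes "\<And>l. l \<in> {1..L} \<Longrightarrow> (u, l) \<in> K"
  shows "(\<lambda>a. of_bool (\<forall>l\<in>{1..L}. a (u, l) = x l) :: real) \<in> borel_measurable (PiM K (\<lambda>_. attr_measure mu1))"
proof -
  have "(\<lambda>a. \<Prod>l\<in>{1..L}. of_bool (a (u, l) = x l) :: real) \<in> borel_measurable (PiM K (\<lambda>_. attr_measure mu1))"
    by (rule borel_measurable_prod, rule borel_measurable_attr_component) (use assms in auto)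
  then show ?thesis by (subst (asm) prod_of_bool) simp_all
qed

section \<open>The product kernel Q_L\<close>

lemma QL_cong:
  assumes "\<And>l. l \<in> {1..L} \<Longrightarrow> a l = a' l" "\<And>l. l \<in> {1..L} \<Longrightarrow> b l = b' l"
  shows "QL q L a b = QL q L a' b'"
  unfolding QL_def using assms by (intro prod.cong) auto

lemma QL_bounds:
  assumes q01: "\<forall>a\<in>{0,1}. \<forall>b\<in>{0,1}. q a b \<in> {0..1}"
    and "\<And>l. l \<in> {1..L} \<Longrightarrow> a l \<in> {0,1}" "\<And>l. l \<in> {1..L} \<Longrightarrow> b l \<in> {0,1}"
  shows "0 \<le> QL q L a b \<and> QL q L a b \<le> 1"
proof -
  have "q (a l) (b l) \<in> {0..1}" if "l \<in> {1..L}" for l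
    using q01 assms(2,3)[OF that] by blast
  then show ?thesis unfolding QL_def by (auto intro!: prod_nonneg prod_le_1)
qed

lemma borel_measurable_QL_attr:
  assumes "\<And>l. l \<in> {1..L} \<Longrightarrow> (u, l) \<in> K" "\<And>l. l \<in> {1..L} \<Longrightarrow> (v, l) \<in> K"
  shows "(\<lambda>a. QL q L (\<lambda>l. a (u, l)) (\<lambda>l. a (v, l))) \<in> borel_measurable (PiM K (\<lambda>_. attr_measure mu1))"
  unfolding QL_def
  by (rule borel_measurable_prod, rule borel_measurable_attr_component2[where h=q]) (use assms in auto)

lemma borel_measurable_QL_attr_fixed:
  assumes "\<And>l. l \<in> {1..L} \<Longrightarrow> (v, l) \<in> K"
  shows "(\<lambda>a. QL q L x (\<lambda>l. a (v, l))) \<in> borel_measurable (PiM K (\<lambda>_. attr_measure mu1))"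
  unfolding QL_def
  by (rule borel_measurable_prod, rule borel_measurable_attr_component[where h="\<lambda>y. q (x _) y"])
     (use assms in auto)

lemma integral_QL_attr:
  assumes "0 \<le> mu1" "mu1 \<le> 1" "v \<in> {1..n}"
  shows "(\<integral>a. QL q L x (\<lambda>l. a (v, l)) \<partial>attr_space mu1 n L) =
    (\<Prod>l\<in>{1..L}. Gamma_MAG (1 - mu1) mu1 q (x l))"
proof -
  have "(\<integral>a. QL q L x (\<lambda>l. a (v, l)) \<partial>attr_space mu1 n L) =
      (\<Prod>l\<in>{1..L}. \<integral>y. q (x l) y \<partial>attr_measure mu1)"
    unfolding QL_def
    by (rule integral_PiM_prod_components[where g="\<lambda>l y. q (x l) y", OF measure_pmf.prob_space_axioms])
       (use assms in \<open>auto simp: inj_on_def integrable_attr_measure\<close>)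
  also have "\<dots> = (\<Prod>l\<in>{1..L}. Gamma_MAG (1 - mu1) mu1 q (x l))"
    using assms by (simp add: integral_attr_measure Gamma_MAG_def)
  finally show ?thesis .
qed

section \<open>Probability that a node is isolated\<close>

type_synonym MAG_sample = "(nat \<times> nat \<Rightarrow> nat) \<times> (nat \<times> nat \<Rightarrow> real)"

definition isolated_event ::
    "real \<Rightarrow> (nat \<Rightarrow> nat \<Rightarrow> real) \<Rightarrow> nat \<Rightarrow> nat \<Rightarrow> nat \<Rightarrow> MAG_sample set" where
  "isolated_event mu1 q n L u =
     {\<omega> \<in> space (MAG_space mu1 n L). \<forall>v\<in>{1..n}. \<not> MAG_adj q L \<omega> u v}"

lemma sets_MAG_adj:
  assumes "u \<in> {1..n}" "v \<in> {1..n}"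
  shows "{\<omega> \<in> space (MAG_space mu1 n L). MAG_adj q L \<omega> u v} \<in> sets (MAG_space mu1 n L)"
proof (cases "u = v")
  case True
  then show ?thesis by (simp add: MAG_adj_def)
next
  case False
  have "(\<lambda>\<omega>. snd \<omega> (min u v, max u v)) \<in> measurable (MAG_space mu1 n L) unif01"
    unfolding MAG_space_def using assms False
    by (intro measurable_compose[OF measurable_snd measurable_component_singleton]) auto
  moreover have "measurable (MAG_space mu1 n L) unif01 = measurable (MAG_space mu1 n L) borel"
    by (rule measurable_cong_sets) auto
  moreover have "(\<lambda>a. QL q L (\<lambda>l. a (u, l)) (\<lambda>l. a (v, l))) \<in> borel_measurable (attr_space mu1 n L)"
    by (rule borel_measurable_QL_attr) (use assms in auto)
  then have "(\<lambda>\<omega>. QL q L (\<lambda>l. fst \<omega> (u, l)) (\<lambda>l. fst \<omega> (v, l))) \<in> borel_measurable (MAG_space mu1 n L)"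
    unfolding MAG_space_def by (rule measurable_compose[OF measurable_fst])
  ultimately show ?thesis
    using False borel_measurable_le by (simp add: MAG_adj_def)
qed

lemma sets_isolated_event:
  assumes "u \<in> {1..n}"
  shows "isolated_event mu1 q n L u \<in> sets (MAG_space mu1 n L)"
proof -
  have "isolated_event mu1 q n L u = space (MAG_space mu1 n L) -
      (\<Union>v\<in>{1..n}. {\<omega> \<in> space (MAG_space mu1 n L). MAG_adj q L \<omega> u v})"
    by (auto simp: isolated_event_def)
  also have "\<dots> \<in> sets (MAG_space mu1 n L)"
    using sets_MAG_adj assms by (intro sets.Diff sets.top sets.finite_UN) auto
  finally show ?thesis .
qed

lemma expected_isolated_eq_sum:
  "expected_isolated mu1 q n L = (\<Sum>u\<in>{1..n}. measure (MAG_space mu1 n L) (isolated_event mu1 q n L u))"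
proof -
  interpret prob_space "MAG_space mu1 n L" by (rule prob_space_MAG_space)
  have "real (isolated_count q n L \<omega>) = (\<Sum>u\<in>{1..n}. indicator (isolated_event mu1 q n L u) \<omega>)"
    if "\<omega> \<in> space (MAG_space mu1 n L)" for \<omega>
    using that by (simp add: isolated_count_def isolated_event_def indicator_def Int_def)
  then have "expected_isolated mu1 q n L =
      (\<integral>\<omega>. (\<Sum>u\<in>{1..n}. indicator (isolated_event mu1 q n L u) \<omega>) \<partial>MAG_space mu1 n L)"
    unfolding expected_isolated_def by (rule Bochner_Integration.integral_cong[OF refl])
  also have "\<dots> = (\<Sum>u\<in>{1..n}. measure (MAG_space mu1 n L) (isolated_event mu1 q n L u))"
  proof (subst Bochner_Integration.integral_sum)
    show "integrable (MAG_space mu1 n L) (indicat_real (isolated_event mu1 q n L u))" if "u \<in> {1..n}" for u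
      using sets_isolated_event[OF that]
      by (intro integrable_const_bound[where B=1] borel_measurable_indicator) auto
    have "isolated_event mu1 q n L u \<subseteq> space (MAG_space mu1 n L)" for u
      by (auto simp: isolated_event_def)
    then show "(\<Sum>u\<in>{1..n}. integral\<^sup>L (MAG_space mu1 n L) (indicator (isolated_event mu1 q n L u)))
        = (\<Sum>u\<in>{1..n}. measure (MAG_space mu1 n L) (isolated_event mu1 q n L u))"
      by (simp add: Int_absorb2)
  qed
  finally show ?thesis .
qed

definition unif_tail :: "real \<Rightarrow> real" where
  "unif_tail t = max 0 (min 1 (1 - t))"

lemma measure_unif01_greaterThan: "measure unif01 {t<..} = unif_tail t"
proof -
  have "measure unif01 {t<..} = measure lborel ({0<..<1} \<inter> {t<..})"
    by (subst measure_uniform_measure) auto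
  also have "\<dots> = unif_tail t"
  proof -
    consider "t < 0" | "0 \<le> t" "t < 1" | "1 \<le> t" by linarith
    then show ?thesis
    proof cases
      case 1
      then have "{0<..<1} \<inter> {t<..} = {0<..<1::real}" by auto
      then show ?thesis using 1 by (simp add: unif_tail_def)
    next
      case 2
      then have "{0<..<1} \<inter> {t<..} = {t<..<1::real}" by auto
      then show ?thesis using 2 by (simp add: unif_tail_def)
    next
      case 3
      then have "{0<..<1} \<inter> {t<..} = ({} :: real set)" by auto
      then show ?thesis using 3 by (simp add: unif_tail_def)
    qed
  qed
  finally show ?thesis .
qed

lemma borel_measurable_unif_tail [measurable]: "unif_tail \<in> borel_measurable borel"
  unfolding unif_tail_def[abs_def] by measurable

lemma abs_unif_tail_le_one: "\<bar>unif_tail t\<bar> \<le> 1"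
  by (simp add: unif_tail_def)

lemma indicator_isolated_event:
  assumes "\<omega> \<in> space (MAG_space mu1 n L)"
  shows "indicator (isolated_event mu1 q n L u) \<omega> = (\<Prod>v\<in>{1..n}-{u}.
      indicator {QL q L (\<lambda>l. fst \<omega> (u, l)) (\<lambda>l. fst \<omega> (v, l))<..} (snd \<omega> (min u v, max u v)) :: real)"
proof -
  have "(\<forall>v\<in>{1..n}. \<not> MAG_adj q L \<omega> u v) \<longleftrightarrow>
      (\<forall>v\<in>{1..n}-{u}. QL q L (\<lambda>l. fst \<omega> (u, l)) (\<lambda>l. fst \<omega> (v, l)) < snd \<omega> (min u v, max u v))"
    by (auto simp: MAG_adj_def not_le)
  then show ?thesis
    using assms by (simp add: isolated_event_def indicator_def prod_of_bool)
qed

lemma prob_isolated_eq_integral_tail: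
  assumes u: "u \<in> {1..n}"
  shows "measure (MAG_space mu1 n L) (isolated_event mu1 q n L u) =
    (\<integral>a. (\<Prod>v\<in>{1..n}-{u}. unif_tail (QL q L (\<lambda>l. a (u, l)) (\<lambda>l. a (v, l)))) \<partial>attr_space mu1 n L)"
proof -
  interpret U: prob_space unif01 by (rule prob_space_unif01)
  let ?U = "PiM (node_pairs n) (\<lambda>_. unif01)"
  let ?A = "isolated_event mu1 q n L u"
  interpret pair_prob_space "attr_space mu1 n L" ?U
    by (simp add: pair_prob_space_def pair_sigma_finite_def prob_space_attr_PiM prob_space_PiM
        prob_space_unif01 prob_space_imp_sigma_finite)
  have A: "?A \<in> sets (attr_space mu1 n L \<Otimes>\<^sub>M ?U)"
    using sets_isolated_event[OF u] unfolding MAG_space_def .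
  have "measure (MAG_space mu1 n L) ?A = (\<integral>\<omega>. indicator ?A \<omega> \<partial>(attr_space mu1 n L \<Otimes>\<^sub>M ?U))"
    using sets.sets_into_space[OF A] by (simp add: MAG_space_def Int_absorb2)
  also have "\<dots> = (\<integral>a. (\<integral>U. indicator ?A (a, U) \<partial>?U) \<partial>attr_space mu1 n L)"
    using A by (intro integral_fst'[symmetric] P.integrable_const_bound[where B=1] borel_measurable_indicator) auto
  also have "\<dots> = (\<integral>a. (\<Prod>v\<in>{1..n}-{u}. unif_tail (QL q L (\<lambda>l. a (u, l)) (\<lambda>l. a (v, l)))) \<partial>attr_space mu1 n L)"
  proof (rule Bochner_Integration.integral_cong[OF refl])
    fix a assume a: "a \<in> space (attr_space mu1 n L)"
    define c where "c v = QL q L (\<lambda>l. a (u, l)) (\<lambda>l. a (v, l))" for v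
    define p where "p v = (min u v, max u v)" for v
    have "(\<integral>U. indicator ?A (a, U) \<partial>?U) = (\<integral>U. (\<Prod>v\<in>{1..n}-{u}. indicator {c v<..} (U (p v)) :: real) \<partial>?U)"
      using a by (intro Bochner_Integration.integral_cong refl)
        (simp add: indicator_isolated_event MAG_space_def space_pair_measure c_def p_def)
    also have "\<dots> = (\<Prod>v\<in>{1..n}-{u}. \<integral>t. indicator {c v<..} t \<partial>unif01)"
    proof (rule integral_PiM_prod_components[OF prob_space_unif01])
      show "finite (node_pairs n)" by (rule finite_subset[of _ "{1..n} \<times> {1..n}"]) auto
      show "inj_on p ({1..n} - {u})" by (auto simp: inj_on_def p_def min_def max_def split: if_splits)
      show "p ` ({1..n} - {u}) \<subseteq> node_pairs n" using u by (auto simp: p_def min_def max_def)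
      show "integrable unif01 (indicat_real {c v<..})" for v
        by (intro U.integrable_const_bound[where B=1]) auto
    qed
    also have "\<dots> = (\<Prod>v\<in>{1..n}-{u}. unif_tail (c v))"
      by (simp add: measure_unif01_greaterThan)
    finally show "(\<integral>U. indicator ?A (a, U) \<partial>?U) = (\<Prod>v\<in>{1..n}-{u}. unif_tail (QL q L (\<lambda>l. a (u, l)) (\<lambda>l. a (v, l))))"
      by (simp add: c_def)
  qed
  finally show ?thesis .
qed

lemma integral_unif_tail_QL:
  assumes q01: "\<forall>a\<in>{0,1}. \<forall>b\<in>{0,1}. q a b \<in> {0..1}" and mu1: "0 \<le> mu1" "mu1 \<le> 1"
    and x: "\<And>l. l \<in> {1..L} \<Longrightarrow> x l \<in> {0,1}" and v: "v \<in> {1..n}"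
  shows "(\<integral>a. unif_tail (QL q L x (\<lambda>l. a (v, l))) \<partial>attr_space mu1 n L) =
    1 - (\<Prod>l\<in>{1..L}. Gamma_MAG (1 - mu1) mu1 q (x l))"
proof -
  interpret prob_space "attr_space mu1 n L" by (rule prob_space_attr_PiM)
  let ?Q = "\<lambda>a. QL q L x (\<lambda>l. a (v, l))"
  have meas: "?Q \<in> borel_measurable (attr_space mu1 n L)"
    by (rule borel_measurable_QL_attr_fixed) (use v in auto)
  have AE_01: "AE a in attr_space mu1 n L. 0 \<le> ?Q a \<and> ?Q a \<le> 1"
    using AE_attr_space_binary by eventually_elim (rule QL_bounds[OF q01 x], use v in auto)
  have "(\<integral>a. unif_tail (?Q a) \<partial>attr_space mu1 n L) = (\<integral>a. 1 - ?Q a \<partial>attr_space mu1 n L)"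
    using meas AE_01 by (intro integral_cong_AE) (auto simp: unif_tail_def elim: AE_mp)
  also have "\<dots> = 1 - (\<integral>a. ?Q a \<partial>attr_space mu1 n L)"
  proof -
    have "integrable (attr_space mu1 n L) ?Q"
      by (rule integrable_const_bound[where B=1]) (use AE_01 meas in \<open>auto elim: AE_mp\<close>)
    then show ?thesis
      using prob_space by (simp only: Bochner_Integration.integral_diff[OF integrable_const] lebesgue_integral_const) simp
  qed
  also have "\<dots> = 1 - (\<Prod>l\<in>{1..L}. Gamma_MAG (1 - mu1) mu1 q (x l))"
    using integral_QL_attr[OF mu1 v] by simp
  finally show ?thesis .
qed

(* Once A_L(u) = x is fixed, the factors for distinct v depend on the disjoint blocks
   {v} \<times> {1..L} of independent coordinates. *)
lemma integral_attr_vector_eq_times_tails: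
  assumes q01: "\<forall>a\<in>{0,1}. \<forall>b\<in>{0,1}. q a b \<in> {0..1}" and mu1: "0 \<le> mu1" "mu1 \<le> 1"
    and u: "u \<in> {1..n}" and x: "\<And>l. l \<in> {1..L} \<Longrightarrow> x l \<in> {0,1}"
  shows "(\<integral>a. of_bool (\<forall>l\<in>{1..L}. a (u, l) = x l) * (\<Prod>v\<in>{1..n}-{u}. unif_tail (QL q L x (\<lambda>l. a (v, l))))
      \<partial>attr_space mu1 n L) =
    (\<integral>a. of_bool (\<forall>l\<in>{1..L}. a (u, l) = x l) \<partial>attr_space mu1 n L) *
      (1 - (\<Prod>l\<in>{1..L}. Gamma_MAG (1 - mu1) mu1 q (x l))) ^ (n - 1)"
proof -
  define K where "K w = {w} \<times> {1..L}" for w :: nat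
  define g where "g w y = (if w = u then of_bool (\<forall>l\<in>{1..L}. y (u, l) = x l)
      else unif_tail (QL q L x (\<lambda>l. y (w, l))))" for w and y :: "nat \<times> nat \<Rightarrow> nat"
  have g_restrict: "g w (restrict a (K w)) = g w a" for w a
    by (auto simp: g_def K_def intro!: arg_cong[where f=unif_tail] QL_cong)
  have "(\<integral>a. (\<Prod>w\<in>{1..n}. g w (restrict a (K w))) \<partial>attr_space mu1 n L) =
      (\<Prod>w\<in>{1..n}. \<integral>a. g w (restrict a (K w)) \<partial>attr_space mu1 n L)"
  proof (rule integral_PiM_prod_blocks[OF measure_pmf.prob_space_axioms])
    show "disjoint_family_on K {1..n}" by (auto simp: disjoint_family_on_def K_def)
    show "\<bar>g j y\<bar> \<le> 1" for j y by (simp add: g_def abs_unif_tail_le_one)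
    show "g j \<in> borel_measurable (PiM (K j) (\<lambda>_. attr_measure mu1))" for j
    proof (cases "j = u")
      case True
      then show ?thesis
        using borel_measurable_attr_vector_eq[of L u "K j" x mu1] by (simp add: g_def[abs_def] K_def)
    next
      case False
      have "(\<lambda>y. QL q L x (\<lambda>l. y (j, l))) \<in> borel_measurable (PiM (K j) (\<lambda>_. attr_measure mu1))"
        by (rule borel_measurable_QL_attr_fixed) (simp add: K_def)
      then show ?thesis
        using False by (simp add: g_def[abs_def])
    qed
  qed (auto simp: K_def)
  then have blocks: "(\<integral>a. g u a * (\<Prod>w\<in>{1..n}-{u}. g w a) \<partial>attr_space mu1 n L) =
      (\<integral>a. g u a \<partial>attr_space mu1 n L) * (\<Prod>w\<in>{1..n}-{u}. \<integral>a. g w a \<partial>attr_space mu1 n L)"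
    using u by (simp add: g_restrict prod.remove)
  have "(\<Prod>w\<in>{1..n}-{u}. \<integral>a. g w a \<partial>attr_space mu1 n L) =
      (\<Prod>w\<in>{1..n}-{u}. 1 - (\<Prod>l\<in>{1..L}. Gamma_MAG (1 - mu1) mu1 q (x l)))"
  proof (rule prod.cong[OF refl])
    fix w assume "w \<in> {1..n}-{u}"
    then show "(\<integral>a. g w a \<partial>attr_space mu1 n L) = 1 - (\<Prod>l\<in>{1..L}. Gamma_MAG (1 - mu1) mu1 q (x l))"
      using integral_unif_tail_QL[where x=x and L=L and n=n and v=w, OF q01 mu1 x] by (simp add: g_def)
  qed
  moreover have "(\<Prod>w\<in>{1..n}-{u}. g w a) = (\<Prod>v\<in>{1..n}-{u}. unif_tail (QL q L x (\<lambda>l. a (v, l))))" for a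
    by (rule prod.cong) (auto simp: g_def)
  ultimately show ?thesis
    using blocks u by (simp add: g_def)
qed

lemma AE_sum_attr_vectors:
  fixes h :: "(nat \<Rightarrow> nat) \<Rightarrow> (nat \<times> nat \<Rightarrow> nat) \<Rightarrow> real"
  assumes "u \<in> {1..n}"
  shows "AE a in attr_space mu1 n L. (\<Sum>x\<in>PiE {1..L} (\<lambda>_. {0, 1}).
    of_bool (\<forall>l\<in>{1..L}. a (u, l) = x l) * h x a) = h (restrict (\<lambda>l. a (u, l)) {1..L}) a"
  using AE_attr_space_binary by eventually_elim (rule sum_PiE_of_bool_eq, use assms in auto)

lemma prob_isolated_eq_sum_attr_vectors:
  assumes q01: "\<forall>a\<in>{0,1}. \<forall>b\<in>{0,1}. q a b \<in> {0..1}" and mu1: "0 \<le> mu1" "mu1 \<le> 1"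
    and u: "u \<in> {1..n}"
  shows "measure (MAG_space mu1 n L) (isolated_event mu1 q n L u) =
    (\<Sum>x\<in>PiE {1..L} (\<lambda>_. {0, 1}). (\<integral>a. of_bool (\<forall>l\<in>{1..L}. a (u, l) = x l) \<partial>attr_space mu1 n L) *
      (1 - (\<Prod>l\<in>{1..L}. Gamma_MAG (1 - mu1) mu1 q (x l))) ^ (n - 1))"
proof -
  let ?M = "attr_space mu1 n L"
  let ?X = "PiE {1..L} (\<lambda>_. {0, 1::nat})"
  define G where "G x a = (of_bool (\<forall>l\<in>{1..L}. a (u, l) = x l) :: real)"
    for x :: "nat \<Rightarrow> nat" and a :: "nat \<times> nat \<Rightarrow> nat"
  define F where "F x a = (\<Prod>v\<in>{1..n}-{u}. unif_tail (QL q L x (\<lambda>l. a (v, l))))"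
    for x :: "nat \<Rightarrow> nat" and a :: "nat \<times> nat \<Rightarrow> nat"
  interpret prob_space ?M by (rule prob_space_attr_PiM)
  have measG: "G x \<in> borel_measurable ?M" for x
    unfolding G_def by (rule borel_measurable_attr_vector_eq) (use u in auto)
  have measF: "F x \<in> borel_measurable ?M" for x
    unfolding F_def
    by (intro borel_measurable_prod measurable_compose[OF borel_measurable_QL_attr_fixed borel_measurable_unif_tail]) auto
  have F_restrict: "F (restrict (\<lambda>l. a (u, l)) {1..L}) a = F (\<lambda>l. a (u, l)) a" for a
    unfolding F_def by (intro prod.cong refl arg_cong[where f=unif_tail] QL_cong) auto
  have "(\<lambda>a. F (\<lambda>l. a (u, l)) a) \<in> borel_measurable ?M"
    unfolding F_def using u
    by (intro borel_measurable_prod measurable_compose[OF borel_measurable_QL_attr borel_measurable_unif_tail]) auto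
  moreover have "(\<lambda>a. \<Sum>x\<in>?X. G x a * F x a) \<in> borel_measurable ?M"
    using measG measF by (intro borel_measurable_sum borel_measurable_times)
  moreover have "AE a in ?M. F (\<lambda>l. a (u, l)) a = (\<Sum>x\<in>?X. G x a * F x a)"
    using AE_sum_attr_vectors[OF u, where h=F and L=L and ?mu1.0=mu1] unfolding G_def
    by eventually_elim (metis F_restrict)
  ultimately have "(\<integral>a. F (\<lambda>l. a (u, l)) a \<partial>?M) = (\<integral>a. (\<Sum>x\<in>?X. G x a * F x a) \<partial>?M)"
    by (rule integral_cong_AE)
  also have "\<dots> = (\<Sum>x\<in>?X. \<integral>a. G x a * F x a \<partial>?M)"
  proof (rule Bochner_Integration.integral_sum, rule integrable_const_bound[where B=1])
    show "AE a in ?M. norm (G x a * F x a) \<le> 1" for x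
      unfolding G_def F_def
      by (auto intro!: AE_I2 mult_le_one prod_le_1 simp: abs_mult abs_prod abs_unif_tail_le_one)
    show "(\<lambda>a. G x a * F x a) \<in> borel_measurable ?M" for x
      using measG measF by (rule borel_measurable_times)
  qed
  also have "\<dots> = (\<Sum>x\<in>?X. (\<integral>a. G x a \<partial>?M) * (1 - (\<Prod>l\<in>{1..L}. Gamma_MAG (1 - mu1) mu1 q (x l))) ^ (n - 1))"
  proof (rule sum.cong[OF refl])
    fix x assume "x \<in> ?X"
    then have "\<And>l. l \<in> {1..L} \<Longrightarrow> x l \<in> {0, 1}" by auto
    then show "(\<integral>a. G x a * F x a \<partial>?M) = (\<integral>a. G x a \<partial>?M) * (1 - (\<Prod>l\<in>{1..L}. Gamma_MAG (1 - mu1) mu1 q (x l))) ^ (n - 1)"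
      unfolding G_def F_def by (rule integral_attr_vector_eq_times_tails[OF q01 mu1 u])
  qed
  finally show ?thesis
    unfolding G_def F_def using prob_isolated_eq_integral_tail[OF u] by simp
qed

lemma prob_isolated_eq_integral_Gamma:
  assumes q01: "\<forall>a\<in>{0,1}. \<forall>b\<in>{0,1}. q a b \<in> {0..1}" and mu1: "0 \<le> mu1" "mu1 \<le> 1"
    and u: "u \<in> {1..n}"
  shows "measure (MAG_space mu1 n L) (isolated_event mu1 q n L u) =
    (\<integral>a. (1 - (\<Prod>l\<in>{1..L}. Gamma_MAG (1 - mu1) mu1 q (a (u, l)))) ^ (n - 1) \<partial>attr_space mu1 n L)"
proof -
  let ?M = "attr_space mu1 n L"
  let ?X = "PiE {1..L} (\<lambda>_. {0, 1::nat})"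
  define G where "G x a = (of_bool (\<forall>l\<in>{1..L}. a (u, l) = x l) :: real)"
    for x :: "nat \<Rightarrow> nat" and a :: "nat \<times> nat \<Rightarrow> nat"
  define c where "c x = (1 - (\<Prod>l\<in>{1..L}. Gamma_MAG (1 - mu1) mu1 q (x l))) ^ (n - 1)"
    for x :: "nat \<Rightarrow> nat"
  interpret prob_space ?M by (rule prob_space_attr_PiM)
  have measG: "G x \<in> borel_measurable ?M" for x
    unfolding G_def by (rule borel_measurable_attr_vector_eq) (use u in auto)
  have c_restrict: "c (restrict (\<lambda>l. a (u, l)) {1..L}) = c (\<lambda>l. a (u, l))" for a
    unfolding c_def by (intro arg_cong[where f="\<lambda>t. (1 - t) ^ (n - 1)"] prod.cong) auto
  have "(\<lambda>a. c (\<lambda>l. a (u, l))) \<in> borel_measurable ?M"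
    unfolding c_def using u
    by (intro borel_measurable_power borel_measurable_diff borel_measurable_const borel_measurable_prod
        borel_measurable_attr_component) auto
  moreover have "(\<lambda>a. \<Sum>x\<in>?X. G x a * c x) \<in> borel_measurable ?M"
    using measG by (intro borel_measurable_sum borel_measurable_times borel_measurable_const)
  moreover have "AE a in ?M. c (\<lambda>l. a (u, l)) = (\<Sum>x\<in>?X. G x a * c x)"
    using AE_sum_attr_vectors[OF u, where h="\<lambda>x _. c x" and L=L and ?mu1.0=mu1] unfolding G_def
    by eventually_elim (metis c_restrict)
  ultimately have "(\<integral>a. c (\<lambda>l. a (u, l)) \<partial>?M) = (\<integral>a. (\<Sum>x\<in>?X. G x a * c x) \<partial>?M)"
    by (rule integral_cong_AE)
  also have "\<dots> = (\<Sum>x\<in>?X. (\<integral>a. G x a \<partial>?M) * c x)"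
  proof -
    have "integrable ?M (G x)" for x
    proof (rule integrable_const_bound[where B=1])
      show "AE a in ?M. norm (G x a) \<le> 1" by (simp add: G_def)
    qed (rule measG)
    then show ?thesis by (subst Bochner_Integration.integral_sum) auto
  qed
  finally show ?thesis
    using prob_isolated_eq_sum_attr_vectors[OF q01 mu1 u] by (simp add: G_def c_def)
qed

lemma Gamma_MAG_bounds:
  assumes q01: "\<forall>a\<in>{0,1}. \<forall>b\<in>{0,1}. q a b \<in> {0..1}" and mu1: "0 \<le> mu1" "mu1 \<le> 1"
    and b: "b \<in> {0,1}"
  shows "0 \<le> Gamma_MAG (1 - mu1) mu1 q b \<and> Gamma_MAG (1 - mu1) mu1 q b \<le> 1"
proof -
  have "q b 0 \<in> {0..1}" "q b 1 \<in> {0..1}" using q01 b by auto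
  then show ?thesis
    using mu1 by (auto simp: Gamma_MAG_def intro!: convex_bound_le)
qed

lemma prod_Gamma_MAG_bounds:
  assumes q01: "\<forall>a\<in>{0,1}. \<forall>b\<in>{0,1}. q a b \<in> {0..1}" and mu1: "0 \<le> mu1" "mu1 \<le> 1"
    and Gamma_le: "Gamma_MAG (1 - mu1) mu1 q 0 \<le> Gamma_MAG (1 - mu1) mu1 q 1"
    and x: "\<And>l. l \<in> {1..L} \<Longrightarrow> x l \<in> {0,1}"
  shows "Gamma_MAG (1 - mu1) mu1 q 0 ^ L \<le> (\<Prod>l\<in>{1..L}. Gamma_MAG (1 - mu1) mu1 q (x l))
    \<and> (\<Prod>l\<in>{1..L}. Gamma_MAG (1 - mu1) mu1 q (x l)) \<le> 1"
proof -
  let ?\<Gamma> = "Gamma_MAG (1 - mu1) mu1 q"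
  have \<Gamma>0: "0 \<le> ?\<Gamma> 0" using Gamma_MAG_bounds[OF q01 mu1, of 0] by simp
  have \<Gamma>x: "?\<Gamma> 0 \<le> ?\<Gamma> (x l) \<and> ?\<Gamma> (x l) \<le> 1" if "l \<in> {1..L}" for l
    using x[OF that] Gamma_le Gamma_MAG_bounds[OF q01 mu1, of "x l"] by auto
  have "?\<Gamma> 0 ^ L = (\<Prod>l\<in>{1..L}. ?\<Gamma> 0)" by simp
  also have "\<dots> \<le> (\<Prod>l\<in>{1..L}. ?\<Gamma> (x l))" by (rule prod_mono) (use \<Gamma>0 \<Gamma>x in auto)
  finally show ?thesis
    using \<Gamma>0 \<Gamma>x by (auto intro!: prod_le_1 intro: order_trans)
qed

lemma integral_attr_vector_zero:
  assumes "0 \<le> mu1" "mu1 \<le> 1" "u \<in> {1..n}"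
  shows "(\<integral>a. of_bool (\<forall>l\<in>{1..L}. a (u, l) = 0) \<partial>attr_space mu1 n L) = (1 - mu1) ^ L"
proof -
  have "(\<integral>a. of_bool (\<forall>l\<in>{1..L}. a (u, l) = 0) \<partial>attr_space mu1 n L) =
      (\<integral>a. (\<Prod>l\<in>{1..L}. of_bool (a (u, l) = 0) :: real) \<partial>attr_space mu1 n L)"
    by (simp add: prod_of_bool)
  also have "\<dots> = (\<Prod>l\<in>{1..L}. \<integral>y. of_bool (y = 0) \<partial>attr_measure mu1)"
    by (rule integral_PiM_prod_components[where g="\<lambda>_ y. of_bool (y = 0)", OF measure_pmf.prob_space_axioms])
       (use assms in \<open>auto simp: inj_on_def integrable_attr_measure\<close>)
  also have "\<dots> = (1 - mu1) ^ L"
    using assms by (simp add: integral_attr_measure)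
  finally show ?thesis .
qed

lemma prob_isolated_bounds:
  assumes q01: "\<forall>a\<in>{0,1}. \<forall>b\<in>{0,1}. q a b \<in> {0..1}" and mu1: "0 \<le> mu1" "mu1 \<le> 1"
    and Gamma_le: "Gamma_MAG (1 - mu1) mu1 q 0 \<le> Gamma_MAG (1 - mu1) mu1 q 1"
    and u: "u \<in> {1..n}"
  shows "(1 - mu1) ^ L * (1 - Gamma_MAG (1 - mu1) mu1 q 0 ^ L) ^ (n - 1) \<le>
      measure (MAG_space mu1 n L) (isolated_event mu1 q n L u)"
    and "measure (MAG_space mu1 n L) (isolated_event mu1 q n L u) \<le>
      (1 - Gamma_MAG (1 - mu1) mu1 q 0 ^ L) ^ (n - 1)"
proof -
  let ?M = "attr_space mu1 n L"
  let ?\<Gamma> = "Gamma_MAG (1 - mu1) mu1 q"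
  let ?H = "\<lambda>a. (1 - (\<Prod>l\<in>{1..L}. ?\<Gamma> (a (u, l)))) ^ (n - 1)"
  let ?b = "(1 - ?\<Gamma> 0 ^ L) ^ (n - 1)"
  let ?Z = "\<lambda>a. of_bool (\<forall>l\<in>{1..L}. a (u, l) = 0) :: real"
  interpret prob_space ?M by (rule prob_space_attr_PiM)
  have H_bounds: "AE a in ?M. ?Z a * ?b \<le> ?H a \<and> ?H a \<le> ?b"
    using AE_attr_space_binary
  proof eventually_elim
    case (elim a)
    then have prod: "?\<Gamma> 0 ^ L \<le> (\<Prod>l\<in>{1..L}. ?\<Gamma> (a (u, l))) \<and> (\<Prod>l\<in>{1..L}. ?\<Gamma> (a (u, l))) \<le> 1"
      by (intro prod_Gamma_MAG_bounds[OF q01 mu1 Gamma_le]) (use u in auto)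
    have "(\<Prod>l\<in>{1..L}. ?\<Gamma> (a (u, l))) = ?\<Gamma> 0 ^ L" if "\<forall>l\<in>{1..L}. a (u, l) = 0"
      using that by (simp add: prod.cong[of "{1..L}" "{1..L}" "\<lambda>l. ?\<Gamma> (a (u, l))" "\<lambda>_. ?\<Gamma> 0"])
    with prod show ?case by (auto intro: power_mono)
  qed
  have meas_H: "?H \<in> borel_measurable ?M"
    using u by (intro borel_measurable_power borel_measurable_diff borel_measurable_const borel_measurable_prod
        borel_measurable_attr_component) auto
  have int_H: "integrable ?M ?H"
  proof (rule integrable_const_bound[where B="?b"])
    have "?\<Gamma> 0 ^ L \<le> 1"
      using Gamma_MAG_bounds[OF q01 mu1, of 0] by (simp add: power_le_one)
    then have Zb: "0 \<le> ?Z a * ?b" for a by simp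
    show "AE a in ?M. norm (?H a) \<le> ?b"
      using H_bounds
    proof eventually_elim
      case (elim a)
      then show ?case using Zb[of a] by auto
    qed
  qed (rule meas_H)
  have meas_Z: "?Z \<in> borel_measurable ?M"
    by (rule borel_measurable_attr_vector_eq) (use u in auto)
  have "(1 - mu1) ^ L * ?b = (\<integral>a. ?Z a * ?b \<partial>?M)"
    using integral_attr_vector_zero[OF mu1 u] by simp
  also have "\<dots> \<le> (\<integral>a. ?H a \<partial>?M)"
    using H_bounds meas_Z
    by (intro integral_mono_AE int_H integrable_mult_left integrable_const_bound[where B=1]) (auto elim: AE_mp)
  finally show "(1 - mu1) ^ L * ?b \<le> measure (MAG_space mu1 n L) (isolated_event mu1 q n L u)"
    using prob_isolated_eq_integral_Gamma[OF q01 mu1 u] by simp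
  have "(\<integral>a. ?H a \<partial>?M) \<le> (\<integral>a. ?b \<partial>?M)"
    using H_bounds by (intro integral_mono_AE int_H integrable_const) (auto elim: AE_mp)
  then show "measure (MAG_space mu1 n L) (isolated_event mu1 q n L u) \<le> ?b"
    using prob_isolated_eq_integral_Gamma[OF q01 mu1 u] prob_space by simp
qed

lemma expected_isolated_bounds:
  assumes q01: "\<forall>a\<in>{0,1}. \<forall>b\<in>{0,1}. q a b \<in> {0..1}" and mu1: "0 \<le> mu1" "mu1 \<le> 1"
    and Gamma_le: "Gamma_MAG (1 - mu1) mu1 q 0 \<le> Gamma_MAG (1 - mu1) mu1 q 1"
  shows "real n * (1 - mu1) ^ L * (1 - Gamma_MAG (1 - mu1) mu1 q 0 ^ L) ^ (n - 1) \<le> expected_isolated mu1 q n L"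
    and "expected_isolated mu1 q n L \<le> real n * (1 - Gamma_MAG (1 - mu1) mu1 q 0 ^ L) ^ (n - 1)"
proof -
  let ?b = "(1 - Gamma_MAG (1 - mu1) mu1 q 0 ^ L) ^ (n - 1)"
  have "(\<Sum>u\<in>{1..n}. (1 - mu1) ^ L * ?b) \<le> (\<Sum>u\<in>{1..n}. measure (MAG_space mu1 n L) (isolated_event mu1 q n L u))"
    by (rule sum_mono, rule prob_isolated_bounds(1)[OF q01 mu1 Gamma_le])
  then show "real n * (1 - mu1) ^ L * ?b \<le> expected_isolated mu1 q n L"
    by (simp add: expected_isolated_eq_sum mult.assoc)
  have "(\<Sum>u\<in>{1..n}. measure (MAG_space mu1 n L) (isolated_event mu1 q n L u)) \<le> (\<Sum>u\<in>{1..n}. ?b)"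
    by (rule sum_mono, rule prob_isolated_bounds(2)[OF q01 mu1 Gamma_le])
  then show "expected_isolated mu1 q n L \<le> real n * ?b"
    by (simp add: expected_isolated_eq_sum)
qed

section \<open>Asymptotics along admissible scalings\<close>

lemma tendsto_admissible_div_ln:
  assumes "admissible \<rho> L"
  shows "(\<lambda>n. real (L n) / ln (real n)) \<longlonglongrightarrow> \<rho>"
proof -
  have "(\<lambda>n. real (L n) / ln (real n)) \<sim>[at_top] (\<lambda>n. \<rho> * ln (real n) / ln (real n))"
    using assms unfolding admissible_def by (intro asymp_equiv_intros) auto
  moreover have "(\<lambda>n. \<rho> * ln (real n) / ln (real n)) \<longlonglongrightarrow> \<rho>"
    by real_asymp
  ultimately show ?thesis
    using tendsto_asymp_equiv_cong by blast
qed

lemma mult_power_eq_powr_ln_ratio: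
  assumes "2 \<le> n" "0 < x"
  shows "real n * x ^ k = real n powr (1 + real k / ln (real n) * ln x)"
proof -
  have "(1 + real k / ln (real n) * ln x) * ln (real n) = ln (real n) + real k * ln x"
    using assms(1) by (simp add: field_simps)
  then have "real n powr (1 + real k / ln (real n) * ln x) = exp (ln (real n) + real k * ln x)"
    using assms(1) by (simp add: powr_def)
  also have "\<dots> = real n * x ^ k"
    using assms by (simp add: exp_add exp_of_nat_mult)
  finally show ?thesis by simp
qed

lemma eventually_powr_le_mult_power:
  fixes L :: "nat \<Rightarrow> nat"
  assumes x: "0 < x" and L: "(\<lambda>n. real (L n) / ln (real n)) \<longlonglongrightarrow> \<rho>" and c: "c < 1 + \<rho> * ln x"
  shows "eventually (\<lambda>n. real n powr c \<le> real n * x ^ L n) sequentially"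
proof -
  have "(\<lambda>n. 1 + real (L n) / ln (real n) * ln x) \<longlonglongrightarrow> 1 + \<rho> * ln x"
    by (intro tendsto_intros L)
  then have "eventually (\<lambda>n. c < 1 + real (L n) / ln (real n) * ln x) sequentially"
    using c by (rule order_tendstoD)
  then show ?thesis
    using eventually_ge_at_top[of 2]
  proof eventually_elim
    case (elim n)
    then have "real n powr c \<le> real n powr (1 + real (L n) / ln (real n) * ln x)"
      by (intro powr_mono) auto
    then show ?case
      using mult_power_eq_powr_ln_ratio[OF elim(2) x] by simp
  qed
qed

lemma eventually_mult_power_le_powr:
  fixes L :: "nat \<Rightarrow> nat"
  assumes x: "0 < x" and L: "(\<lambda>n. real (L n) / ln (real n)) \<longlonglongrightarrow> \<rho>" and c: "1 + \<rho> * ln x < c"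
  shows "eventually (\<lambda>n. real n * x ^ L n \<le> real n powr c) sequentially"
proof -
  have "(\<lambda>n. 1 + real (L n) / ln (real n) * ln x) \<longlonglongrightarrow> 1 + \<rho> * ln x"
    by (intro tendsto_intros L)
  then have "eventually (\<lambda>n. 1 + real (L n) / ln (real n) * ln x < c) sequentially"
    using c by (rule order_tendstoD)
  then show ?thesis
    using eventually_ge_at_top[of 2]
  proof eventually_elim
    case (elim n)
    then have "real n powr (1 + real (L n) / ln (real n) * ln x) \<le> real n powr c"
      by (intro powr_mono) auto
    then show ?case
      using mult_power_eq_powr_ln_ratio[OF elim(2) x] by simp
  qed
qed

lemma one_minus_power_le_exp:
  assumes "0 \<le> t" "t \<le> 1"
  shows "(1 - t) ^ k \<le> exp (- (real k * t))"
proof -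
  have "(1 - t) ^ k \<le> exp (- t) ^ k"
    by (rule power_mono) (use assms exp_ge_add_one_self[of "- t"] in auto)
  then show ?thesis by (simp add: exp_of_nat_mult[symmetric])
qed

lemma tendsto_mult_one_minus_power_zero:
  fixes L :: "nat \<Rightarrow> nat"
  assumes g: "0 < g" "g < 1" and L: "(\<lambda>n. real (L n) / ln (real n)) \<longlonglongrightarrow> \<rho>"
    and pos: "0 < 1 + \<rho> * ln g"
  shows "(\<lambda>n. real n * (1 - g ^ L n) ^ (n - 1)) \<longlonglongrightarrow> 0"
proof -
  define c where "c = (1 + \<rho> * ln g) / 2"
  have c: "0 < c" "c < 1 + \<rho> * ln g"
    using pos unfolding c_def by (auto simp: field_simps)
  have g_pow: "0 \<le> g ^ k" "g ^ k \<le> 1" for k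
    using g by (auto simp: power_le_one)
  have lim: "(\<lambda>n. real n * exp (- (real n powr c) / 2)) \<longlonglongrightarrow> 0"
    using c(1) by real_asymp
  show ?thesis
  proof (rule tendsto_sandwich[OF _ _ tendsto_const lim])
    show "eventually (\<lambda>n. 0 \<le> real n * (1 - g ^ L n) ^ (n - 1)) sequentially"
      using g_pow by (intro always_eventually allI mult_nonneg_nonneg zero_le_power) auto
    show "eventually (\<lambda>n. real n * (1 - g ^ L n) ^ (n - 1) \<le> real n * exp (- (real n powr c) / 2)) sequentially"
      using eventually_powr_le_mult_power[OF g(1) L c(2)] eventually_ge_at_top[of 2]
    proof eventually_elim
      case (elim n)
      have "real n / 2 \<le> real (n - 1)"
        using elim(2) by (simp add: of_nat_diff)
      from mult_right_mono[OF this g_pow(1)] have "real n * g ^ L n / 2 \<le> real (n - 1) * g ^ L n"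
        by simp
      then have "real n powr c / 2 \<le> real (n - 1) * g ^ L n"
        using elim(1) by linarith
      have "(1 - g ^ L n) ^ (n - 1) \<le> exp (- (real (n - 1) * g ^ L n))"
        by (rule one_minus_power_le_exp[OF g_pow])
      also have "\<dots> \<le> exp (- (real n powr c) / 2)"
        using \<open>real n powr c / 2 \<le> real (n - 1) * g ^ L n\<close> by simp
      finally show ?case
        by (rule mult_left_mono) simp
    qed
  qed
qed

lemma filterlim_mult_power_one_minus_power_at_top:
  fixes L :: "nat \<Rightarrow> nat"
  assumes g: "0 < g" "g < 1" and m: "0 < m" and L: "(\<lambda>n. real (L n) / ln (real n)) \<longlonglongrightarrow> \<rho>"
    and neg: "1 + \<rho> * ln g < 0" and pos: "0 < 1 + \<rho> * ln m"
  shows "filterlim (\<lambda>n. real n * m ^ L n * (1 - g ^ L n) ^ (n - 1)) at_top sequentially"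
proof -
  define c where "c = - (1 + \<rho> * ln g) / 2"
  define d where "d = (1 + \<rho> * ln m) / 2"
  have c: "0 < c" "1 + \<rho> * ln g < - c"
    using neg unfolding c_def by (auto simp: field_simps)
  have d: "0 < d" "d < 1 + \<rho> * ln m"
    using pos unfolding d_def by (auto simp: field_simps)
  have "(\<lambda>n. real n powr (- c)) \<longlonglongrightarrow> 0"
    using c(1) by real_asymp
  then have small: "eventually (\<lambda>n. real n powr (- c) < 1 / 2) sequentially"
    by (rule order_tendstoD) simp
  have "filterlim (\<lambda>n. real n powr d / 2) at_top sequentially"
    using d(1) by real_asymp
  moreover have "eventually (\<lambda>n. real n powr d / 2 \<le> real n * m ^ L n * (1 - g ^ L n) ^ (n - 1)) sequentially"
    using small eventually_mult_power_le_powr[OF g(1) L c(2)] eventually_powr_le_mult_power[OF m L d(2)]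
  proof eventually_elim
    case (elim n)
    have "real (n - 1) * g ^ L n \<le> real n * g ^ L n"
      using g by (intro mult_right_mono) auto
    then have "real (n - 1) * g ^ L n \<le> 1 / 2"
      using elim(1,2) by linarith
    then have "1 / 2 \<le> 1 + real (n - 1) * (- (g ^ L n))"
      by simp
    also have "\<dots> \<le> (1 - g ^ L n) ^ (n - 1)"
      using Bernoulli_inequality[of "- (g ^ L n)" "n - 1"] g by (simp add: power_le_one)
    finally have "1 / 2 \<le> (1 - g ^ L n) ^ (n - 1)" .
    from mult_left_mono[OF this, of "real n * m ^ L n"] show ?case
      using elim(3) m by simp
  qed
  ultimately show ?thesis
    by (rule filterlim_at_top_mono)
qed

theorem proposition1:
  fixes mu0 mu1 \<rho> :: real and q :: "nat \<Rightarrow> nat \<Rightarrow> real" and L :: "nat \<Rightarrow> nat"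
  assumes "0 < mu0" "mu0 < 1" "0 < mu1" "mu1 < 1" "mu0 + mu1 = 1"
    and "q 0 1 = q 1 0"
    and "\<forall>a\<in>{0,1}. \<forall>b\<in>{0,1}. 0 < q a b \<and> q a b < 1"
    and "\<rho> > 0"
    and "Gamma_MAG mu0 mu1 q 0 < Gamma_MAG mu0 mu1 q 1"
    and "1 + \<rho> * ln mu0 > 0"
    and "admissible \<rho> L"
  shows "(1 + \<rho> * ln (Gamma_MAG mu0 mu1 q 0) < 0 \<longrightarrow>
            filterlim (\<lambda>n. expected_isolated mu1 q n (L n)) at_top sequentially)
       \<and> (1 + \<rho> * ln (Gamma_MAG mu0 mu1 q 0) > 0 \<longrightarrow>
            (\<lambda>n. expected_isolated mu1 q n (L n)) \<longlonglongrightarrow> 0)"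
proof -
  let ?g = "Gamma_MAG mu0 mu1 q 0"
  have mu0: "mu0 = 1 - mu1" using assms(5) by simp
  have q01: "\<forall>a\<in>{0,1}. \<forall>b\<in>{0,1}. q a b \<in> {0..1}" using assms(7) by fastforce
  have g: "0 < ?g" "?g < 1"
    using assms(1,3,5,7) by (auto simp: Gamma_MAG_def intro!: add_pos_pos mult_pos_pos convex_bound_lt)
  have L: "(\<lambda>n. real (L n) / ln (real n)) \<longlonglongrightarrow> \<rho>"
    by (rule tendsto_admissible_div_ln[OF assms(11)])
  note bounds = expected_isolated_bounds[OF q01, of mu1, folded mu0, OF _ _ less_imp_le[OF assms(9)]]
  have lower: "real n * mu0 ^ L n * (1 - ?g ^ L n) ^ (n - 1) \<le> expected_isolated mu1 q n (L n)" for n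
    using bounds(1) assms(3,4) by simp
  have upper: "expected_isolated mu1 q n (L n) \<le> real n * (1 - ?g ^ L n) ^ (n - 1)" for n
    using bounds(2) assms(3,4) by simp
  show ?thesis
  proof (intro conjI impI)
    assume "1 + \<rho> * ln ?g < 0"
    from filterlim_mult_power_one_minus_power_at_top[OF g assms(1) L this assms(10)]
    show "filterlim (\<lambda>n. expected_isolated mu1 q n (L n)) at_top sequentially"
      by (rule filterlim_at_top_mono) (use lower in simp)
  next
    assume "1 + \<rho> * ln ?g > 0"
    from tendsto_mult_one_minus_power_zero[OF g L this]
    show "(\<lambda>n. expected_isolated mu1 q n (L n)) \<longlonglongrightarrow> 0"
      by (rule tendsto_sandwich[OF _ _ tendsto_const, rotated 2])
         (use upper lower order_trans[OF _ lower] g assms(1) in \<open>auto simp: power_le_one\<close>)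
  qed
qed

end
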